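(* Let $G$ be a $k$-uniform $s$-cycle with $k\ge 3$ and $1\le s<\frac{k}{2}$. Then $\lambda(\mathcal{Q})=2+2\alpha_*^{k-2s}$, where $\alpha_*$ is the unique root in $(0,1)$ of $2\alpha^k+\alpha^{2s}-1=0$. When $k$ is even, also $\lambda(\mathcal{L})=2+2\alpha_*^{k-2s}$.
   Context: A $k$-uniform $s$-cycle with $m$ edges has vertex set $\mathbb{Z}_n$, $n=m(k-s)$ (vertex $n+i$ identified with $i$), and edges $e_j=\{j(k-s)+1,\ldots,j(k-s)+k\}$, $j=0,\ldots,m-1$; it is assumed that $n\ge 2k-s$. The degree $d_i$ of a vertex is the number of edges containing it. For a real tensor $\mathcal{T}$ of order $k$ and dimension $n$, $\lambda\in\mathbb{R}$ is an H-eigenvalue if there is nonzero $\mathbf{x}\in\mathbb{R}^n$ with $(\mathcal{T}\mathbf{x}^{k-1})_i=\lambda x_i^{k-1}$ for all $i$, where $(\mathcal{T}\mathbf{x}^{k-1})_i=\sum_{i_2,\ldots,i_k}t_{ii_2\ldots i_k}x_{i_2}\cdots x_{i_k}$; $\lambda(\mathcal{T})$ is the largest H-eigenvalue. The adjacency tensor $\mathcal{A}$ has entries $1/(k-1)!$ at $(i_1,\ldots,i_k)$ with $\{i_1,\ldots,i_k\}$ an edge and $0$ otherwise; $\mathcal{D}$ is diagonal with entries $d_i$; $\mathcal{L}=\mathcal{D}-\mathcal{A}$ (Laplacian tensor), $\mathcal{Q}=\mathcal{D}+\mathcal{A}$ (signless Laplacian tensor). Equivalently the H-eigen-equations read $\lambda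 x_i^{k-1}=d_ix_i^{k-1}\mp\sum_{e\ni i}\prod_{j\in e\setminus\{i\}}x_j$ (minus for $\mathcal{L}$, plus for $\mathcal{Q}$). *)

theory Defs
  imports Main "HOL-Library.Multiset" Complex_Main
begin

text \<open>Tensors of order k and dimension n: index tuples are lists of length k with
  entries in {0..<n}; a tensor is a function from such lists to reals.
  Vectors in R^n are functions nat => real, only their values on {0..<n} matter.\<close>

definition index_tuples :: "nat \<Rightarrow> nat \<Rightarrow> nat list set" where
  "index_tuples l n = {js. length js = l \<and> set js \<subseteq> {..<n}}"

definition tensor_apply :: "(nat list \<Rightarrow> real) \<Rightarrow> nat \<Rightarrow> nat \<Rightarrow> (nat \<Rightarrow> real) \<Rightarrow> nat \<Rightarrow> real" where
  "tensor_apply T k n x i = (\<Sum>js\<in>index_tuples (k - 1) n. T (i # js) * prod_list (map x js))"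

definition H_eigenvalue :: "(nat list \<Rightarrow> real) \<Rightarrow> nat \<Rightarrow> nat \<Rightarrow> real \<Rightarrow> bool" where
  "H_eigenvalue T k n lam \<longleftrightarrow>
     (\<exists>x::nat \<Rightarrow> real. (\<exists>i<n. x i \<noteq> 0) \<and>
        (\<forall>i<n. tensor_apply T k n x i = lam * x i ^ (k - 1)))"

definition largest_H_eigenvalue :: "(nat list \<Rightarrow> real) \<Rightarrow> nat \<Rightarrow> nat \<Rightarrow> real \<Rightarrow> bool" where
  "largest_H_eigenvalue T k n lam \<longleftrightarrow>
     H_eigenvalue T k n lam \<and> (\<forall>mu. H_eigenvalue T k n mu \<longrightarrow> mu \<le> lam)"

definition scycle_n :: "nat \<Rightarrow> nat \<Rightarrow> nat \<Rightarrow> nat" where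
  "scycle_n k s m = m * (k - s)"

definition scycle_edge :: "nat \<Rightarrow> nat \<Rightarrow> nat \<Rightarrow> nat \<Rightarrow> nat set" where
  "scycle_edge k s m j = {(j * (k - s) + t) mod scycle_n k s m | t. 1 \<le> t \<and> t \<le> k}"

definition scycle_edges :: "nat \<Rightarrow> nat \<Rightarrow> nat \<Rightarrow> nat set set" where
  "scycle_edges k s m = scycle_edge k s m ` {..<m}"

definition scycle_degree :: "nat \<Rightarrow> nat \<Rightarrow> nat \<Rightarrow> nat \<Rightarrow> nat" where
  "scycle_degree k s m i = card {e \<in> scycle_edges k s m. i \<in> e}"

definition adjacency_tensor :: "nat \<Rightarrow> nat set set \<Rightarrow> nat list \<Rightarrow> real" where
  "adjacency_tensor k E js =
     (if length js = k \<and> set js \<in> E then 1 / fact (k - 1) else 0)"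

definition degree_tensor :: "nat \<Rightarrow> (nat \<Rightarrow> nat) \<Rightarrow> nat list \<Rightarrow> real" where
  "degree_tensor k d js =
     (if length js = k \<and> (\<forall>j\<in>set js. j = hd js) then real (d (hd js)) else 0)"

definition laplacian_tensor :: "nat \<Rightarrow> nat \<Rightarrow> nat \<Rightarrow> nat list \<Rightarrow> real" where
  "laplacian_tensor k s m js =
     degree_tensor k (scycle_degree k s m) js - adjacency_tensor k (scycle_edges k s m) js"

definition signless_laplacian_tensor :: "nat \<Rightarrow> nat \<Rightarrow> nat \<Rightarrow> nat list \<Rightarrow> real" where
  "signless_laplacian_tensor k s m js =
     degree_tensor k (scycle_degree k s m) js + adjacency_tensor k (scycle_edges k s m) js"

end

theory Submission
  imports Defs "HOL-Combinatorics.Multiset_Permutations"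
begin

text \<open>Let \<open>\<alpha>\<close> be the root. The vector that is 1 on the vertices shared by two consecutive
  edges and \<open>\<alpha>\<close> elsewhere has product \<open>\<alpha>^(k - 2s)\<close> on every edge. Its eigen-equation
  for Q holds with \<open>\<lambda> = 2 + 2\<alpha>^(k - 2s)\<close> at the shared vertices, and at the other vertices
  it is the equation \<open>2\<alpha>^k + \<alpha>^2s = 1\<close>. As Q is nonnegative and the vector positive,
  comparing an arbitrary eigenvector with it at a vertex of maximal ratio bounds every
  H-eigenvalue of any tensor entrywise dominated by Q, in particular of Q and of L, by \<open>\<lambda>\<close>.
  For even k, negating one vertex of degree 1 in every edge gives an eigenvector of L for the
  same \<open>\<lambda>\<close>, because \<open>k - 1\<close> is odd.\<close>

section \<open>Action of degree and adjacency tensors\<close>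

lemma finite_index_tuples: "finite (index_tuples l n)"
proof -
  have "index_tuples l n = {xs. set xs \<subseteq> {..<n} \<and> length xs = l}"
    unfolding index_tuples_def by auto
  then show ?thesis using finite_lists_length_eq[of "{..<n}" l] by simp
qed

lemma tensor_apply_add:
  "tensor_apply (\<lambda>js. f js + g js) k n x i = tensor_apply f k n x i + tensor_apply g k n x i"
  unfolding tensor_apply_def by (simp add: sum.distrib distrib_right)

lemma tensor_apply_diff:
  "tensor_apply (\<lambda>js. f js - g js) k n x i = tensor_apply f k n x i - tensor_apply g k n x i"
  unfolding tensor_apply_def by (simp add: sum_subtractf left_diff_distrib)

lemma tensor_apply_degree_tensor:
  assumes "1 \<le> k" "i < n"
  shows "tensor_apply (degree_tensor k d) k n x i = real (d i) * x i ^ (k - 1)"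
proof -
  let ?r = "replicate (k - 1) i"
  have term_eq: "degree_tensor k d (i # js) * prod_list (map x js) =
      (if js = ?r then real (d i) * x i ^ (k - 1) else 0)"
    if "js \<in> index_tuples (k - 1) n" for js
  proof -
    have len: "length js = k - 1" using that unfolding index_tuples_def by auto
    then have "(\<forall>j\<in>set (i # js). j = hd (i # js)) \<longleftrightarrow> js = ?r"
      using replicate_length_same[of js i] by auto
    then show ?thesis using len assms by (auto simp: degree_tensor_def)
  qed
  have "?r \<in> index_tuples (k - 1) n" using assms unfolding index_tuples_def by auto
  then show ?thesis unfolding tensor_apply_def
    by (simp add: sum.cong[OF refl term_eq] finite_index_tuples)
qed

context
  fixes E :: "nat set set" and k n i :: nat
  assumes edges_uniform: "\<And>e. e \<in> E \<Longrightarrow> card e = k \<and> e \<subseteq> {..<n}"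
    and k_pos: "1 \<le> k" and i_less: "i < n"
begin

lemma finite_edge: "e \<in> E \<Longrightarrow> finite e"
  using edges_uniform[of e] k_pos by (intro card_ge_0_finite) simp

lemma index_tuples_of_edges_eq:
  "{js \<in> index_tuples (k - 1) n. set (i # js) \<in> E} =
     (\<Union>e\<in>{e\<in>E. i \<in> e}. permutations_of_set (e - {i}))"
proof (intro set_eqI iffI)
  fix js assume "js \<in> {js \<in> index_tuples (k - 1) n. set (i # js) \<in> E}"
  then have len: "length js = k - 1" and e: "set (i # js) \<in> E"
    unfolding index_tuples_def by auto
  have "card (set (i # js)) = length (i # js)" using edges_uniform[OF e] len k_pos by simp
  then have "distinct (i # js)" by (rule card_distinct)
  then show "js \<in> (\<Union>e\<in>{e\<in>E. i \<in> e}. permutations_of_set (e - {i}))"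
    using e by (auto simp: permutations_of_set_def intro!: bexI[of _ "set (i # js)"])
next
  fix js assume "js \<in> (\<Union>e\<in>{e\<in>E. i \<in> e}. permutations_of_set (e - {i}))"
  then obtain e where e: "e \<in> E" "i \<in> e" and js: "set js = e - {i}" "distinct js"
    by (auto simp: permutations_of_set_def)
  have "length js = k - 1"
    using distinct_card[OF js(2)] js(1) edges_uniform[OF e(1)] finite_edge[OF e(1)] e by simp
  moreover have "set (i # js) = e" using js e by auto
  ultimately show "js \<in> {js \<in> index_tuples (k - 1) n. set (i # js) \<in> E}"
    using edges_uniform[OF e(1)] e i_less unfolding index_tuples_def by auto
qed

text \<open>Each edge containing i is hit by the \<open>(k - 1)!\<close> orderings of its other vertices,
  which cancel the normalisation of the adjacency tensor.\<close>

lemma tensor_apply_adjacency_tensor: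
  assumes "finite E"
  shows "tensor_apply (adjacency_tensor k E) k n x i = (\<Sum>e\<in>{e\<in>E. i \<in> e}. \<Prod>u\<in>e - {i}. x u)"
proof -
  let ?P = "\<lambda>e. permutations_of_set (e - {i})"
  let ?c = "1 / fact (k - 1) :: real"
  have "tensor_apply (adjacency_tensor k E) k n x i =
      (\<Sum>js\<in>index_tuples (k - 1) n. if set (i # js) \<in> E then ?c * prod_list (map x js) else 0)"
    unfolding tensor_apply_def
    by (rule sum.cong) (use k_pos in \<open>auto simp: adjacency_tensor_def index_tuples_def\<close>)
  also have "\<dots> = (\<Sum>js\<in>{js \<in> index_tuples (k - 1) n. set (i # js) \<in> E}. ?c * prod_list (map x js))"
    by (rule sum.inter_filter[symmetric]) (simp add: finite_index_tuples)
  also have "\<dots> = (\<Sum>e\<in>{e\<in>E. i \<in> e}. \<Sum>js\<in>?P e. ?c * prod_list (map x js))"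
    unfolding index_tuples_of_edges_eq
  proof (rule sum.UNION_disjoint)
    show "finite {e\<in>E. i \<in> e}" using assms by simp
    show "\<forall>e\<in>{e\<in>E. i \<in> e}. finite (?P e)" by simp
    show "\<forall>e\<in>{e\<in>E. i \<in> e}. \<forall>e'\<in>{e\<in>E. i \<in> e}. e \<noteq> e' \<longrightarrow> ?P e \<inter> ?P e' = {}"
    proof (intro ballI impI)
      fix e e' assume "e \<in> {e\<in>E. i \<in> e}" "e' \<in> {e\<in>E. i \<in> e}" "e \<noteq> e'"
      then have "e - {i} \<noteq> e' - {i}" by (metis insert_Diff mem_Collect_eq)
      then show "?P e \<inter> ?P e' = {}" unfolding permutations_of_set_def by blast
    qed
  qed
  also have "\<dots> = (\<Sum>e\<in>{e\<in>E. i \<in> e}. \<Prod>u\<in>e - {i}. x u)"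
  proof (rule sum.cong[OF refl])
    fix e assume e: "e \<in> {e\<in>E. i \<in> e}"
    have card_P: "card (?P e) = fact (k - 1)" using edges_uniform e finite_edge by auto
    have "prod_list (map x js) = (\<Prod>u\<in>e - {i}. x u)" if "js \<in> ?P e" for js
      using that prod.distinct_set_conv_list[of js x] by (auto simp: permutations_of_set_def)
    then show "(\<Sum>js\<in>?P e. ?c * prod_list (map x js)) = (\<Prod>u\<in>e - {i}. x u)"
      using card_P by simp
  qed
  finally show ?thesis .
qed

lemma tensor_apply_adjacency_tensor_const_edge_prod:
  assumes "finite E" and "x i \<noteq> 0" and edge_prod: "\<And>e. e \<in> E \<Longrightarrow> prod x e = P"
  shows "tensor_apply (adjacency_tensor k E) k n x i = real (card {e\<in>E. i \<in> e}) * (P / x i)"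
proof -
  have "prod x (e - {i}) = P / x i" if e: "e \<in> E" "i \<in> e" for e
  proof -
    have "x i * prod x (e - {i}) = P"
      using prod.remove[OF finite_edge[OF e(1)] e(2), of x] edge_prod[OF e(1)] by simp
    then show ?thesis using assms(2) by (simp add: field_simps)
  qed
  then show ?thesis by (simp add: tensor_apply_adjacency_tensor[OF assms(1)])
qed

end

section \<open>Comparison with a positive eigenvector\<close>

lemma abs_prod_list_map_le:
  assumes "\<And>j. j \<in> set js \<Longrightarrow> \<bar>x j\<bar> \<le> (y j :: real)"
  shows "\<bar>prod_list (map x js)\<bar> \<le> prod_list (map y js)"
  using assms
proof (induction js)
  case (Cons j js)
  have y_nonneg: "0 \<le> y j" using Cons.prems[of j] by (meson abs_ge_zero order_trans list.set_intros(1))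
  have "\<bar>prod_list (map x (j # js))\<bar> = \<bar>x j\<bar> * \<bar>prod_list (map x js)\<bar>" by (simp add: abs_mult)
  also have "\<dots> \<le> y j * prod_list (map y js)"
    by (rule mult_mono) (use Cons y_nonneg in auto)
  finally show ?case by simp
qed simp

lemma prod_list_map_scale:
  "prod_list (map (\<lambda>j. t * y j) js) = (t :: real) ^ length js * prod_list (map y js)"
  by (induction js) auto

lemma abs_tensor_apply_le:
  assumes dominated: "\<And>js. \<bar>T js\<bar> \<le> Q js"
    and x_le: "\<And>j. j < n \<Longrightarrow> \<bar>x j\<bar> \<le> t * y j"
  shows "\<bar>tensor_apply T k n x i\<bar> \<le> t ^ (k - 1) * tensor_apply Q k n y i"
proof -
  have "\<bar>tensor_apply T k n x i\<bar> \<le> (\<Sum>js\<in>index_tuples (k - 1) n. \<bar>T (i # js) * prod_list (map x js)\<bar>)"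
    unfolding tensor_apply_def by (rule sum_abs)
  also have "\<dots> \<le> (\<Sum>js\<in>index_tuples (k - 1) n. Q (i # js) * (t ^ (k - 1) * prod_list (map y js)))"
  proof (rule sum_mono)
    fix js assume js: "js \<in> index_tuples (k - 1) n"
    have "\<bar>prod_list (map x js)\<bar> \<le> prod_list (map (\<lambda>j. t * y j) js)"
      by (rule abs_prod_list_map_le) (use js x_le in \<open>auto simp: index_tuples_def\<close>)
    also have "\<dots> = t ^ (k - 1) * prod_list (map y js)"
      using js by (simp add: prod_list_map_scale index_tuples_def)
    finally show "\<bar>T (i # js) * prod_list (map x js)\<bar> \<le> Q (i # js) * (t ^ (k - 1) * prod_list (map y js))"
      unfolding abs_mult
      by (intro mult_mono) (use dominated[of "i # js"] in \<open>auto intro: order_trans[OF abs_ge_zero]\<close>)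
  qed
  also have "\<dots> = t ^ (k - 1) * tensor_apply Q k n y i"
    unfolding tensor_apply_def sum_distrib_left by (rule sum.cong) (simp_all add: mult_ac)
  finally show ?thesis .
qed

text \<open>A Collatz--Wielandt type bound: compare an eigenvector x of T with the positive
  eigenvector y of Q at a vertex where the ratio \<open>\<bar>x i\<bar> / y i\<close> is maximal.\<close>

lemma H_eigenvalue_le_dominating_eigenvalue:
  assumes dominated: "\<And>js. \<bar>T js\<bar> \<le> Q js"
    and y_pos: "\<And>i. i < n \<Longrightarrow> 0 < y i"
    and y_eigen: "\<And>i. i < n \<Longrightarrow> tensor_apply Q k n y i = lam * y i ^ (k - 1)"
    and "H_eigenvalue T k n mu"
  shows "mu \<le> lam"
proof -
  obtain x where "\<exists>i<n. x i \<noteq> 0"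
    and x_eigen: "\<And>i. i < n \<Longrightarrow> tensor_apply T k n x i = mu * x i ^ (k - 1)"
    using assms(4) unfolding H_eigenvalue_def by blast
  then obtain i1 where i1: "i1 < n" "x i1 \<noteq> 0" by blast
  define ratio where "ratio i = \<bar>x i\<bar> / y i" for i
  define t where "t = Max (ratio ` {..<n})"
  have "t \<in> ratio ` {..<n}" unfolding t_def using i1(1) by (intro Max_in) auto
  then obtain i0 where i0: "i0 < n" "ratio i0 = t" by auto
  have ratio_le: "ratio j \<le> t" if "j < n" for j
    unfolding t_def using that by (intro Max_ge) auto
  have "0 < ratio i1" using i1 y_pos[OF i1(1)] unfolding ratio_def by auto
  then have t_pos: "0 < t" using ratio_le[OF i1(1)] by linarith
  have x_le: "\<bar>x j\<bar> \<le> t * y j" if "j < n" for j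
    using ratio_le[OF that] y_pos[OF that] unfolding ratio_def by (simp add: pos_divide_le_eq)
  have x_i0: "\<bar>x i0\<bar> = t * y i0"
    using i0 y_pos[OF i0(1)] unfolding ratio_def by (simp add: field_simps)
  have "\<bar>mu\<bar> * \<bar>x i0\<bar> ^ (k - 1) = \<bar>tensor_apply T k n x i0\<bar>"
    using x_eigen[OF i0(1)] by (simp add: abs_mult power_abs)
  also have "\<dots> \<le> t ^ (k - 1) * tensor_apply Q k n y i0"
    by (intro abs_tensor_apply_le dominated x_le)
  also have "\<dots> = lam * \<bar>x i0\<bar> ^ (k - 1)"
    using y_eigen[OF i0(1)] x_i0 by (simp add: power_mult_distrib)
  finally have "\<bar>mu\<bar> * \<bar>x i0\<bar> ^ (k - 1) \<le> lam * \<bar>x i0\<bar> ^ (k - 1)" .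
  moreover have "0 < \<bar>x i0\<bar> ^ (k - 1)" using x_i0 t_pos y_pos[OF i0(1)] by simp
  ultimately show ?thesis by simp
qed

lemma H_eigenvalueI:
  assumes "i0 < n" "x i0 \<noteq> 0" "\<And>i. i < n \<Longrightarrow> tensor_apply T k n x i = lam * x i ^ (k - 1)"
  shows "H_eigenvalue T k n lam"
  unfolding H_eigenvalue_def using assms by blast

lemma largest_H_eigenvalue_if_dominated:
  assumes "\<And>js. \<bar>T js\<bar> \<le> Q js"
    and "\<And>i. i < n \<Longrightarrow> 0 < y i"
    and "\<And>i. i < n \<Longrightarrow> tensor_apply Q k n y i = lam * y i ^ (k - 1)"
    and "H_eigenvalue T k n lam"
  shows "largest_H_eigenvalue T k n lam"
  unfolding largest_H_eigenvalue_def
  using assms H_eigenvalue_le_dominating_eigenvalue[OF assms(1-3)] by blast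

lemma degree_tensor_nonneg: "0 \<le> degree_tensor k d js"
  unfolding degree_tensor_def by simp

lemma adjacency_tensor_nonneg: "0 \<le> adjacency_tensor k E js"
  unfolding adjacency_tensor_def by simp

lemma abs_laplacian_tensor_le: "\<bar>laplacian_tensor k s m js\<bar> \<le> signless_laplacian_tensor k s m js"
  unfolding laplacian_tensor_def signless_laplacian_tensor_def
  using degree_tensor_nonneg[of k "scycle_degree k s m" js]
    adjacency_tensor_nonneg[of k "scycle_edges k s m" js] by linarith

lemma abs_signless_laplacian_tensor:
  "\<bar>signless_laplacian_tensor k s m js\<bar> = signless_laplacian_tensor k s m js"
  unfolding signless_laplacian_tensor_def
  using degree_tensor_nonneg[of k "scycle_degree k s m" js]
    adjacency_tensor_nonneg[of k "scycle_edges k s m" js] by linarith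

lemma ex1_root_in_unit_interval:
  fixes k l :: nat
  assumes "1 \<le> k" "1 \<le> l"
  shows "\<exists>!a::real. 0 < a \<and> a < 1 \<and> 2 * a ^ k + a ^ l - 1 = 0"
proof -
  define f where "f a = 2 * a ^ k + a ^ l - (1::real)" for a
  have f_strict_mono: "f a < f b" if "0 < a" "a < b" for a b
  proof -
    have "a ^ k < b ^ k" "a ^ l < b ^ l" using that assms by (simp_all add: power_strict_mono)
    then show ?thesis unfolding f_def by simp
  qed
  have "f 0 = -1" "f 1 = 2" unfolding f_def using assms by (simp_all add: power_0_left)
  moreover have "continuous_on {0..1} f" unfolding f_def by (intro continuous_intros)
  ultimately obtain a where a: "0 \<le> a" "a \<le> 1" "f a = 0" using IVT'[of f 0 0 1] by auto
  then have "0 < a" "a < 1" using \<open>f 0 = -1\<close> \<open>f 1 = 2\<close> by (auto simp: order.order_iff_strict)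
  show ?thesis
  proof (rule ex1I[of _ a])
    show "0 < a \<and> a < 1 \<and> 2 * a ^ k + a ^ l - 1 = 0" using \<open>0 < a\<close> \<open>a < 1\<close> a(3) unfolding f_def by simp
    fix b :: real assume "0 < b \<and> b < 1 \<and> 2 * b ^ k + b ^ l - 1 = 0"
    then have "0 < b" "f b = 0" unfolding f_def by simp_all
    then show "b = a" using f_strict_mono[of a b] f_strict_mono[of b a] \<open>0 < a\<close> a(3)
      by (cases b a rule: linorder_cases) auto
  qed
qed

text \<open>The root equation is exactly the eigen-equation at a vertex of degree 1 and weight a.\<close>

lemma root_eigen_identity:
  fixes a :: real
  assumes "0 < a" "2 * s < k" "2 * a ^ k + a ^ (2 * s) - 1 = 0"
  shows "a ^ (k - 1) + a ^ (k - 2 * s) / a = (2 + 2 * a ^ (k - 2 * s)) * a ^ (k - 1)"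
proof -
  define b where "b = k - 2 * s - 1"
  have "k = b + 1 + 2 * s" using assms(2) unfolding b_def by simp
  then have powers: "a ^ (k - 1) = a ^ b * a ^ (2 * s)" "a ^ (k - 2 * s) = a ^ b * a"
      "a ^ k = a ^ b * a * a ^ (2 * s)"
    by (simp_all add: power_add)
  have "(2 + 2 * (a ^ b * a)) * (a ^ b * a ^ (2 * s)) - (a ^ b * a ^ (2 * s) + a ^ b) =
      a ^ b * (2 * (a ^ b * a * a ^ (2 * s)) + a ^ (2 * s) - 1)"
    by (simp add: algebra_simps)
  then show ?thesis using assms(1,3) unfolding powers by simp
qed

section \<open>Structure of the s-cycle\<close>

locale scycle =
  fixes k s m p n :: nat
  defines "p \<equiv> k - s" and "n \<equiv> scycle_n k s m"
  assumes s_pos: "1 \<le> s" and two_s_less_k: "2 * s < k" and n_ge: "2 * k - s \<le> n"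
begin

lemma k_eq: "k = p + s" using two_s_less_k unfolding p_def by simp

lemma s_less_p: "s < p" using two_s_less_k unfolding p_def by simp

lemma p_pos: "0 < p" using s_less_p by simp

lemma p_minus_s: "p - s = k - 2 * s"
  unfolding p_def by simp

lemma n_eq: "n = m * p" unfolding n_def p_def scycle_n_def by simp

lemma m_ge_3: "3 \<le> m"
proof (rule ccontr)
  assume "\<not> 3 \<le> m"
  then have "m * p \<le> 2 * p" by simp
  moreover have "2 * p + s \<le> m * p" using n_ge n_eq k_eq by simp
  ultimately show False using s_pos by linarith
qed

lemma k_less_n: "k < n"
proof -
  have "3 * p \<le> m * p" using m_ge_3 by simp
  then show ?thesis using n_eq k_eq s_less_p by linarith
qed

lemma scycle_edge_eq_image: "scycle_edge k s m j = (\<lambda>t. (j * p + t) mod n) ` {1..k}"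
  unfolding scycle_edge_def p_def n_def by auto

lemma mod_offset_cancel:
  assumes "j < m" "t < n"
  shows "((j * p + t) mod n + n - j * p) mod n = t"
proof -
  have jp: "j * p \<le> n" using assms(1) n_eq by simp
  then have "((j * p + t) mod n + n - j * p) mod n = ((j * p + t) mod n + (n - j * p)) mod n"
    by simp
  also have "\<dots> = (j * p + t + (n - j * p)) mod n" by (simp add: mod_add_left_eq)
  also have "j * p + t + (n - j * p) = t + n" using jp by simp
  finally show ?thesis using assms(2) by simp
qed

lemma inj_on_edge_param:
  assumes "j < m"
  shows "inj_on (\<lambda>t. (j * p + t) mod n) {1..k}"
proof (rule inj_onI)
  fix t t' assume "t \<in> {1..k}" "t' \<in> {1..k}" and eq: "(j * p + t) mod n = (j * p + t') mod n"
  then have "t < n" "t' < n" using k_less_n by auto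
  then show "t = t'" using eq mod_offset_cancel[OF assms] by metis
qed

lemma mem_scycle_edge_iff_offset:
  assumes "i < n" "j < m"
  shows "i \<in> scycle_edge k s m j \<longleftrightarrow> 1 \<le> (i + n - j * p) mod n \<and> (i + n - j * p) mod n \<le> k"
proof
  assume "i \<in> scycle_edge k s m j"
  then obtain t where t: "1 \<le> t" "t \<le> k" "i = (j * p + t) mod n"
    unfolding scycle_edge_eq_image by auto
  have "j * p \<le> n" using assms(2) n_eq by simp
  then have "(i + n - j * p) mod n = t" using mod_offset_cancel[OF assms(2), of t] t k_less_n by simp
  then show "1 \<le> (i + n - j * p) mod n \<and> (i + n - j * p) mod n \<le> k" using t by simp
next
  assume bounds: "1 \<le> (i + n - j * p) mod n \<and> (i + n - j * p) mod n \<le> k"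
  have "j * p \<le> n" using assms(2) n_eq by simp
  then have "(j * p + (i + n - j * p)) mod n = i" using assms(1) by simp
  then have "(j * p + (i + n - j * p) mod n) mod n = i" by (simp add: mod_add_right_eq)
  then show "i \<in> scycle_edge k s m j" unfolding scycle_edge_eq_image using bounds by force
qed

lemma offset_div_mod:
  assumes "i < n" "j < m"
  shows "(i + n - j * p) mod n = ((i div p + m - j) mod m) * p + i mod p"
proof -
  let ?X = "i div p + (m - j)"
  have "i + n - j * p = i + (m - j) * p"
    using assms(2) n_eq by (simp add: diff_mult_distrib)
  also have "\<dots> = ?X * p + i mod p" by (simp add: add_mult_distrib)
  finally have "(i + n - j * p) mod n = (?X * p + i mod p) mod (p * m)"
    using n_eq by (simp add: mult.commute)
  also have "\<dots> = p * ((?X * p + i mod p) div p mod m) + (?X * p + i mod p) mod p"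
    by (rule mod_mult2_eq)
  also have "\<dots> = (?X mod m) * p + i mod p" using p_pos by simp
  finally show ?thesis using assms(2) by simp
qed

lemma div_p_less_m: "i < n \<Longrightarrow> i div p < m"
  using n_eq p_pos by (simp add: div_less_iff_less_mult mult.commute)

lemma pred_mod_m: "q < m \<Longrightarrow> (q + m - 1) mod m = (if q = 0 then m - 1 else q - 1)"
  using m_ge_3 by (auto simp: le_mod_geq)

lemma mem_scycle_edge_iff:
  assumes "i < n" "j < m"
  shows "i \<in> scycle_edge k s m j \<longleftrightarrow>
    (j = i div p \<and> 1 \<le> i mod p) \<or> (j = (i div p + m - 1) mod m \<and> i mod p \<le> s)"
proof -
  let ?q = "i div p" and ?r = "i mod p"
  let ?c = "(?q + m - j) mod m"
  have q: "?q < m" using div_p_less_m[OF assms(1)] .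
  have r: "?r < p" using p_pos by simp
  have c_iff: "1 \<le> ?c * p + ?r \<and> ?c * p + ?r \<le> k \<longleftrightarrow> (?c = 0 \<and> 1 \<le> ?r) \<or> (?c = 1 \<and> ?r \<le> s)"
  proof (cases "2 \<le> ?c")
    case True
    then have "2 * p \<le> ?c * p" by simp
    then have "\<not> ?c * p + ?r \<le> k" using k_eq s_less_p by linarith
    then show ?thesis using True by auto
  next
    case False
    then have "?c = 0 \<or> ?c = 1" by auto
    moreover have "?r \<le> p + s" using r by simp
    ultimately show ?thesis using k_eq p_pos by auto
  qed
  have c_eq: "?c = (if j \<le> ?q then ?q - j else ?q + m - j)"
    using q assms(2) by (auto simp: le_mod_geq)
  have "?c = 0 \<longleftrightarrow> j = ?q" using c_eq q assms(2) by auto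
  moreover have "?c = 1 \<longleftrightarrow> j = (?q + m - 1) mod m"
    unfolding pred_mod_m[OF q] using c_eq q assms(2) m_ge_3 by auto
  ultimately show ?thesis
    unfolding mem_scycle_edge_iff_offset[OF assms] offset_div_mod[OF assms] c_iff by simp
qed

lemma inj_on_scycle_edge: "inj_on (scycle_edge k s m) {..<m}"
  \<comment> \<open>the vertex \<open>(j + 1) p\<close> lies in edge j and in no other edge\<close>
proof (rule inj_onI)
  fix j j' assume j: "j \<in> {..<m}" and j': "j' \<in> {..<m}"
    and eq: "scycle_edge k s m j = scycle_edge k s m j'"
  let ?v = "((j + 1) mod m) * p"
  have "(j + 1) mod m \<le> m - 1" using m_ge_3 by (simp add: less_Suc_eq_le[symmetric])
  then have "?v \<le> (m - 1) * p" by simp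
  also have "\<dots> < n" using n_eq m_ge_3 p_pos by simp
  finally have v: "?v < n" .
  have "((j + 1) mod m + m - 1) mod m = j"
  proof (cases "j + 1 < m")
    case False
    then have "j + 1 = m" using j by simp
    then show ?thesis by simp
  qed simp
  then have "?v \<in> scycle_edge k s m j \<and> (?v \<in> scycle_edge k s m j' \<longleftrightarrow> j' = j)"
    using mem_scycle_edge_iff[OF v] j j' p_pos by simp
  then show "j = j'" using eq by blast
qed

lemma card_scycle_edge: "j < m \<Longrightarrow> card (scycle_edge k s m j) = k"
  using card_image[OF inj_on_edge_param] unfolding scycle_edge_eq_image by simp

lemma scycle_edge_subset: "scycle_edge k s m j \<subseteq> {..<n}"
  unfolding scycle_edge_eq_image using k_less_n by auto

lemma finite_scycle_edges: "finite (scycle_edges k s m)"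
  unfolding scycle_edges_def by simp

lemma scycle_edges_uniform: "e \<in> scycle_edges k s m \<Longrightarrow> card e = k \<and> e \<subseteq> {..<n}"
  unfolding scycle_edges_def using card_scycle_edge scycle_edge_subset by auto

lemma scycle_degree_eq:
  assumes "i < n"
  shows "scycle_degree k s m i = (if 1 \<le> i mod p \<and> i mod p \<le> s then 2 else 1)"
proof -
  let ?q = "i div p" and ?q' = "(i div p + m - 1) mod m" and ?r = "i mod p"
  let ?J = "{j. j < m \<and> i \<in> scycle_edge k s m j}"
  have "{e \<in> scycle_edges k s m. i \<in> e} = scycle_edge k s m ` ?J"
    unfolding scycle_edges_def by auto
  moreover have "inj_on (scycle_edge k s m) ?J" by (rule inj_on_subset[OF inj_on_scycle_edge]) auto
  ultimately have "scycle_degree k s m i = card ?J"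
    unfolding scycle_degree_def by (simp add: card_image)
  also have "?J = {j. j < m \<and> ((j = ?q \<and> 1 \<le> ?r) \<or> (j = ?q' \<and> ?r \<le> s))}"
    using mem_scycle_edge_iff[OF assms] by auto
  also have "\<dots> = (if 1 \<le> ?r then {?q} else {}) \<union> (if ?r \<le> s then {?q'} else {})"
    using div_p_less_m[OF assms] m_ge_3 by auto
  finally show ?thesis
    using pred_mod_m[OF div_p_less_m[OF assms]] m_ge_3 s_pos by auto
qed

lemma tensor_apply_scycle_adjacency_const_edge_prod:
  assumes "i < n" "w i \<noteq> 0" and edge_prod: "\<And>j. j < m \<Longrightarrow> prod w (scycle_edge k s m j) = P"
  shows "tensor_apply (adjacency_tensor k (scycle_edges k s m)) k n w i =
    real (scycle_degree k s m i) * (P / w i)"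
  unfolding scycle_degree_def
  using assms s_pos two_s_less_k edge_prod
  by (intro tensor_apply_adjacency_tensor_const_edge_prod finite_scycle_edges scycle_edges_uniform)
    (auto simp: scycle_edges_def)

lemma mod_p_of_le_k: "t \<le> k \<Longrightarrow> t mod p = (if t < p then t else if t = p then 0 else t - p)"
  using k_eq s_less_p by (auto simp: le_mod_geq)

lemma prod_scycle_edge_mod:
  assumes "j < m"
  shows "(\<Prod>u\<in>scycle_edge k s m j. g (u mod p)) = (\<Prod>t\<in>{1..k}. g (t mod p) :: real)"
proof -
  have "(\<Prod>u\<in>scycle_edge k s m j. g (u mod p)) = (\<Prod>t\<in>{1..k}. g ((j * p + t) mod n mod p))"
    unfolding scycle_edge_eq_image
    by (subst prod.reindex[OF inj_on_edge_param[OF assms]]) (simp add: comp_def)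
  also have "\<dots> = (\<Prod>t\<in>{1..k}. g (t mod p))"
    using mod_mod_cancel[of p n] n_eq by simp
  finally show ?thesis .
qed

end

section \<open>The eigenvectors\<close>

text \<open>The vertices u with \<open>1 \<le> u mod p \<le> s\<close> are those shared by two consecutive edges;
  \<open>u mod p = 0\<close> selects exactly one vertex of degree 1 in each edge.\<close>

definition scycle_weight :: "nat \<Rightarrow> nat \<Rightarrow> real \<Rightarrow> nat \<Rightarrow> real" where
  "scycle_weight p s a u = (if 1 \<le> u mod p \<and> u mod p \<le> s then 1 else a)"

definition signed_scycle_weight :: "nat \<Rightarrow> nat \<Rightarrow> real \<Rightarrow> nat \<Rightarrow> real" where
  "signed_scycle_weight p s a u = (if u mod p = 0 then -1 else 1) * scycle_weight p s a u"

context scycle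
begin

lemma prod_scycle_weight_edge:
  assumes "j < m"
  shows "prod (scycle_weight p s a) (scycle_edge k s m j) = a ^ (p - s)"
proof -
  let ?shared = "\<lambda>t. 1 \<le> t mod p \<and> t mod p \<le> s"
  have "{1..k} \<inter> - {t. ?shared t} = {s + 1..p}"
    using mod_p_of_le_k k_eq s_less_p by (auto split: if_splits)
  then have "(\<Prod>t\<in>{1..k}. if ?shared t then 1 else a) = a ^ (p - s)"
    by (simp add: prod.If_cases)
  then show ?thesis unfolding scycle_weight_def
    using prod_scycle_edge_mod[OF assms, of "\<lambda>r. if 1 \<le> r \<and> r \<le> s then 1 else a"] by simp
qed

lemma prod_signed_scycle_weight_edge:
  assumes "j < m"
  shows "prod (signed_scycle_weight p s a) (scycle_edge k s m j) = - (a ^ (p - s))"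
proof -
  have "{1..k} \<inter> {t. t mod p = 0} = {p}"
  proof (intro set_eqI iffI)
    fix t assume "t \<in> {1..k} \<inter> {t. t mod p = 0}"
    then show "t \<in> {p}" using mod_p_of_le_k[of t] k_eq s_less_p by (auto split: if_splits)
  qed (use k_eq p_pos in auto)
  then have "(\<Prod>t\<in>{1..k}. if t mod p = 0 then -1 else 1) = (-1 :: real)"
    by (simp add: prod.If_cases)
  then have "(\<Prod>u\<in>scycle_edge k s m j. if u mod p = 0 then -1 else 1) = (-1 :: real)"
    using prod_scycle_edge_mod[OF assms, of "\<lambda>r. if r = 0 then -1 else 1"] by simp
  then show ?thesis
    unfolding signed_scycle_weight_def prod.distrib prod_scycle_weight_edge[OF assms] by simp
qed

lemma signless_laplacian_eigen_scycle_weight: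
  assumes "0 < a" "2 * a ^ k + a ^ (2 * s) - 1 = 0" "i < n"
  shows "tensor_apply (signless_laplacian_tensor k s m) k n (scycle_weight p s a) i =
    (2 + 2 * a ^ (k - 2 * s)) * scycle_weight p s a i ^ (k - 1)"
proof -
  let ?w = "scycle_weight p s a" and ?d = "real (scycle_degree k s m i)"
  have "?w i \<noteq> 0" using assms(1) unfolding scycle_weight_def by simp
  then have "tensor_apply (signless_laplacian_tensor k s m) k n ?w i =
      ?d * ?w i ^ (k - 1) + ?d * (a ^ (k - 2 * s) / ?w i)"
    using assms(3) two_s_less_k prod_scycle_weight_edge
    unfolding signless_laplacian_tensor_def tensor_apply_add p_minus_s
    by (simp add: tensor_apply_degree_tensor tensor_apply_scycle_adjacency_const_edge_prod)
  then show ?thesis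
    using root_eigen_identity[OF assms(1) two_s_less_k assms(2)]
    by (simp add: scycle_weight_def scycle_degree_eq[OF assms(3)])
qed

lemma laplacian_eigen_signed_scycle_weight:
  assumes "even k" "0 < a" "2 * a ^ k + a ^ (2 * s) - 1 = 0" "i < n"
  shows "tensor_apply (laplacian_tensor k s m) k n (signed_scycle_weight p s a) i =
    (2 + 2 * a ^ (k - 2 * s)) * signed_scycle_weight p s a i ^ (k - 1)"
proof -
  let ?w = "signed_scycle_weight p s a" and ?d = "real (scycle_degree k s m i)"
  have "?w i \<noteq> 0" using assms(2) unfolding signed_scycle_weight_def scycle_weight_def by simp
  then have "tensor_apply (laplacian_tensor k s m) k n ?w i =
      ?d * ?w i ^ (k - 1) + ?d * (a ^ (k - 2 * s) / ?w i)"
    using assms(4) two_s_less_k prod_signed_scycle_weight_edge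
    unfolding laplacian_tensor_def tensor_apply_diff p_minus_s
    by (simp add: tensor_apply_degree_tensor tensor_apply_scycle_adjacency_const_edge_prod)
  moreover have "odd (k - 1)" using assms(1) two_s_less_k by simp
  ultimately show ?thesis
    using root_eigen_identity[OF assms(2) two_s_less_k assms(3)] assms(2)
    by (auto simp: signed_scycle_weight_def scycle_weight_def scycle_degree_eq[OF assms(4)])
qed

lemma largest_H_eigenvalue_signless_laplacian:
  assumes "0 < a" "2 * a ^ k + a ^ (2 * s) - 1 = 0"
  shows "largest_H_eigenvalue (signless_laplacian_tensor k s m) k n (2 + 2 * a ^ (k - 2 * s))"
proof (rule largest_H_eigenvalue_if_dominated)
  show weight_pos: "0 < scycle_weight p s a i" for i
    using assms(1) unfolding scycle_weight_def by simp
  show "H_eigenvalue (signless_laplacian_tensor k s m) k n (2 + 2 * a ^ (k - 2 * s))"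
  proof (rule H_eigenvalueI)
    show "0 < n" using k_less_n by simp
    show "scycle_weight p s a 0 \<noteq> 0" using weight_pos[of 0] by simp
  qed (rule signless_laplacian_eigen_scycle_weight[OF assms])
qed (use assms abs_signless_laplacian_tensor signless_laplacian_eigen_scycle_weight in auto)

lemma largest_H_eigenvalue_laplacian:
  assumes "even k" "0 < a" "2 * a ^ k + a ^ (2 * s) - 1 = 0"
  shows "largest_H_eigenvalue (laplacian_tensor k s m) k n (2 + 2 * a ^ (k - 2 * s))"
proof (rule largest_H_eigenvalue_if_dominated[where Q = "signless_laplacian_tensor k s m"])
  show "0 < scycle_weight p s a i" for i
    using assms(2) unfolding scycle_weight_def by simp
  show "H_eigenvalue (laplacian_tensor k s m) k n (2 + 2 * a ^ (k - 2 * s))"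
  proof (rule H_eigenvalueI)
    show "0 < n" using k_less_n by simp
    show "signed_scycle_weight p s a 0 \<noteq> 0"
      using assms(2) unfolding signed_scycle_weight_def scycle_weight_def by simp
  qed (rule laplacian_eigen_signed_scycle_weight[OF assms])
qed (use assms abs_laplacian_tensor_le signless_laplacian_eigen_scycle_weight in auto)

end

theorem theorem5p1:
  fixes k s m :: nat
  assumes "k \<ge> 3" and "1 \<le> s" and "2 * s < k"
    and "scycle_n k s m \<ge> 2 * k - s"
  shows "(\<exists>!a::real. 0 < a \<and> a < 1 \<and> 2 * a ^ k + a ^ (2 * s) - 1 = 0) \<and>
    (\<forall>a::real. 0 < a \<and> a < 1 \<and> 2 * a ^ k + a ^ (2 * s) - 1 = 0 \<longrightarrow>
       largest_H_eigenvalue (signless_laplacian_tensor k s m) k (scycle_n k s m)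
         (2 + 2 * a ^ (k - 2 * s)) \<and>
       (even k \<longrightarrow> largest_H_eigenvalue (laplacian_tensor k s m) k (scycle_n k s m)
         (2 + 2 * a ^ (k - 2 * s))))"
proof -
  interpret scycle k s m "k - s" "scycle_n k s m"
    using assms(2-4) by unfold_locales simp_all
  show ?thesis
    using ex1_root_in_unit_interval[of k "2 * s"] assms(1,2)
      largest_H_eigenvalue_signless_laplacian largest_H_eigenvalue_laplacian by auto
qed

end
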